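(* Let $s=(x,y,u,v)\in\mathbb{R}^4$ and write $W^k(s)=(x^{(k)},y^{(k)},u^{(k)},v^{(k)})$. (i) If one of the following holds: 1) $s\in P_0$; 2) $s\in Q_4$ and there exists $k\ge0$ with $y^{(k)}v^{(k)}\neq0$; 3) $s\in\mathcal N$ and $W(s)\in P_0$; 4) $s\in\mathcal N_0$ and $W^2(s)\in P_0$; 5) $s\in\mathcal N_1$ and $W^2(s)\in P_0$ — then $\lim_{n\to\infty}W^n(s)=(0,0,0,0)$. (ii) If one of the following holds: a) $s\in F$; b) $s\in\mathcal N$ and $W(s)\in F$; c) $s\in\mathcal N_0$ and $W^2(s)\in F$; d) $s\in\mathcal N_1$ and $W^2(s)\in F$ — then $W^n(s)\to+\infty$ (at least one coordinate of $W^n(s)$ tends to $+\infty$).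
   Context: $W:\mathbb{R}^4\to\mathbb{R}^4$ is the map $W(x,y,u,v)=(x',y',u',v')$ with $x'=\tfrac12 xu+\tfrac14 yu$, $y'=\tfrac12 xv+\tfrac14 yu+\tfrac13 yv$, $u'=\tfrac12 xu+\tfrac12 xv+\tfrac14 yu+\tfrac13 yv$, $v'=\tfrac14 yu+\tfrac13 yv$. $W^k$ denotes the $k$-fold iterate ($W^0$ the identity). Sets: $P=\{(x,y,u,v): x,y,u,v\ge0\}$; $Q_4=\{(x,y,u,v)\in P: x+y+u+v\le4\}$; $\mathcal N=\{(x,y,u,v): x,y,u,v\le0\}$; $\mathcal N_0=\{(x,y,u,v): x\le0,y\le0,u\ge0,v\ge0\}$; $\mathcal N_1=\{(x,y,u,v): x\ge0,y\ge0,u\le0,v\le0\}$; $P_0=\{(x,y,u,v)\in P: (x+y)(u+v)<4\}$; $F=\{(x,y,u,v)\in P: x+y+u+v>4,\ \max\{\tfrac{xu}{4},\tfrac{yu}{16},\tfrac{yv}{9}\}>1\}$. *)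

theory Defs
  imports "HOL-Analysis.Analysis"
begin

type_synonym state = "real \<times> real \<times> real \<times> real"

definition W :: "state \<Rightarrow> state" where
  "W s = (case s of (x, y, u, v) \<Rightarrow>
     (x* u/2 + y* u/4,
      x* v/2 + y* u/4 + y* v/3,
      x* u/2 + x* v/2 + y* u/4 + y* v/3,
      y* u/4 + y* v/3))"

definition P :: "state set" where
  "P = {(x, y, u, v). x \<ge> 0 \<and> y \<ge> 0 \<and> u \<ge> 0 \<and> v \<ge> 0}"

definition Q4 :: "state set" where
  "Q4 = {(x, y, u, v). (x, y, u, v) \<in> P \<and> x + y + u + v \<le> 4}"

definition NN :: "state set" where
  "NN = {(x, y, u, v). x \<le> 0 \<and> y \<le> 0 \<and> u \<le> 0 \<and> v \<le> 0}"

definition NN0 :: "state set" where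
  "NN0 = {(x, y, u, v). x \<le> 0 \<and> y \<le> 0 \<and> u \<ge> 0 \<and> v \<ge> 0}"

definition NN1 :: "state set" where
  "NN1 = {(x, y, u, v). x \<ge> 0 \<and> y \<ge> 0 \<and> u \<le> 0 \<and> v \<le> 0}"

definition P0 :: "state set" where
  "P0 = {(x, y, u, v). (x, y, u, v) \<in> P \<and> (x + y) * (u + v) < 4}"

definition F :: "state set" where
  "F = {(x, y, u, v). (x, y, u, v) \<in> P \<and> x + y + u + v > 4 \<and>
          Max {x* u/4, y* u/16, y* v/9} > 1}"

definition cx :: "state \<Rightarrow> real" where "cx s = fst s"
definition cy :: "state \<Rightarrow> real" where "cy s = fst (snd s)"
definition cu :: "state \<Rightarrow> real" where "cu s = fst (snd (snd s))"
definition cv :: "state \<Rightarrow> real" where "cv s = snd (snd (snd s))"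

end

theory Submission
  imports Defs
begin

text \<open>
  Two quantities control the dynamics on the positive orthant \<open>P\<close>. The potential
  \<open>p = (x + y)(u + v)\<close> satisfies the exact identity \<open>p(W s) = (p/2)\<^sup>2 - (yv)\<^sup>2/36\<close>,
  so \<open>p(W s)/4 \<le> (p(s)/4)\<^sup>2\<close> and \<open>p/4\<close> tends to \<open>0\<close> along the orbit once it is below \<open>1\<close>; since every
  coordinate of \<open>W s\<close> is at most \<open>p s\<close>, the orbit tends to \<open>0\<close>. On the simplex \<open>Q\<^sub>4\<close> outside
  \<open>P\<^sub>0\<close> the AM-GM inequality forces \<open>x + y = u + v = 2\<close>, so the orbit stays in \<open>Q\<^sub>4\<close> with
  \<open>p = 4\<close> until some \<open>yv \<noteq> 0\<close> pushes \<open>p\<close> below \<open>4\<close>. Dually, the gauge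
  \<open>r = max {xu/4, yu/16, yv/9}\<close> satisfies \<open>r(W s) \<ge> r(s)\<^sup>2\<close> and \<open>u(W s) \<ge> 2 r(s)\<close>, so once
  \<open>r > 1\<close> the coordinate \<open>u\<close> diverges.
\<close>

lemma filterlim_orbit_shift:
  assumes "filterlim (\<lambda>n. g ((f ^^ n) ((f ^^ j) s))) L sequentially"
  shows "filterlim (\<lambda>n. g ((f ^^ n) s)) L sequentially"
proof -
  have "filterlim (\<lambda>n. g ((f ^^ (n + j)) s)) L sequentially"
    using assms by (simp add: funpow_add)
  then show ?thesis
    unfolding filterlim_iff by (subst (asm) eventually_sequentially_seg)
qed

lemma square_recurrence_le_power:
  fixes a :: "nat \<Rightarrow> real"
  assumes nonneg: "\<And>n. 0 \<le> a n" and "a 0 \<le> 1" and step: "\<And>n. a (Suc n) \<le> a n ^ 2"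
  shows "a n \<le> a 0 ^ Suc n"
proof (induction n)
  case 0
  then show ?case by simp
next
  case (Suc n)
  have "a n \<le> a 0"
    using Suc nonneg[of 0] \<open>a 0 \<le> 1\<close> by (meson order.trans power_Suc_le_self)
  then have "a n * a n \<le> a 0 ^ Suc n * a 0"
    using Suc nonneg[of n] by (intro mult_mono) auto
  then show ?case
    using step[of n] by (simp add: power2_eq_square mult.commute)
qed

lemma square_recurrence_tendsto_zero:
  fixes a :: "nat \<Rightarrow> real"
  assumes "\<And>n. 0 \<le> a n" and "a 0 < 1" and "\<And>n. a (Suc n) \<le> a n ^ 2"
  shows "a \<longlonglongrightarrow> 0"
proof (rule real_tendsto_sandwich[where f = "\<lambda>_. 0" and h = "\<lambda>n. a 0 ^ Suc n"])
  show "(\<lambda>n. a 0 ^ Suc n) \<longlonglongrightarrow> 0"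
    using assms(1)[of 0] \<open>a 0 < 1\<close> by (intro LIMSEQ_Suc LIMSEQ_power_zero) auto
  show "\<forall>\<^sub>F n in sequentially. a n \<le> a 0 ^ Suc n"
    using square_recurrence_le_power[of a] assms by (simp add: less_imp_le)
qed (use assms(1) in auto)

lemma square_recurrence_filterlim_at_top:
  fixes r :: "nat \<Rightarrow> real"
  assumes "1 < r 0" and step: "\<And>n. r n ^ 2 \<le> r (Suc n)"
  shows "filterlim r at_top sequentially"
proof -
  have linear_bound: "r 0 + real n * (r 0 - 1) \<le> r n" for n
  proof (induction n)
    case (Suc n)
    have "0 \<le> real n * (r 0 - 1)"
      using \<open>1 < r 0\<close> by simp
    then have "r 0 \<le> r n"
      using Suc by linarith
    then have "1 * (r 0 - 1) \<le> r n * (r n - 1)"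
      using \<open>1 < r 0\<close> by (intro mult_mono) auto
    then show ?case
      using Suc step[of n] by (simp add: power2_eq_square algebra_simps)
  qed simp
  have "filterlim (\<lambda>n. (r 0 - 1) * real n) at_top sequentially"
    using \<open>1 < r 0\<close>
    by (intro filterlim_tendsto_pos_mult_at_top[OF tendsto_const _ filterlim_real_sequentially]) simp
  moreover have "(r 0 - 1) * real n \<le> r n" for n
    using linear_bound[of n] \<open>1 < r 0\<close> by (simp add: algebra_simps)
  ultimately show ?thesis
    by (auto intro: filterlim_at_top_mono always_eventually)
qed

lemma coord_simps [simp]:
  "cx (x, y, u, v) = x" "cy (x, y, u, v) = y" "cu (x, y, u, v) = u" "cv (x, y, u, v) = v"
  by (simp_all add: cx_def cy_def cu_def cv_def)

lemma W_eq:
  "W (x, y, u, v) = (x * u/2 + y * u/4, x * v/2 + y * u/4 + y * v/3,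
     x * u/2 + x * v/2 + y * u/4 + y * v/3, y * u/4 + y * v/3)"
  by (simp add: W_def)

lemma mem_P_iff: "(x, y, u, v) \<in> P \<longleftrightarrow> 0 \<le> x \<and> 0 \<le> y \<and> 0 \<le> u \<and> 0 \<le> v"
  by (simp add: P_def)

lemma W_in_P: "s \<in> P \<Longrightarrow> W s \<in> P"
  by (cases s) (auto simp: W_eq mem_P_iff)

lemma funpow_W_in_P: "s \<in> P \<Longrightarrow> (W ^^ n) s \<in> P"
  by (induction n) (auto simp: W_in_P)

definition potential :: "state \<Rightarrow> real" where
  "potential s = (cx s + cy s) * (cu s + cv s)"

lemma potential_W: "potential (W s) = (potential s / 2) ^ 2 - (cy s * cv s) ^ 2 / 36"
  by (cases s) (simp add: potential_def W_eq power2_eq_square algebra_simps)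

lemma potential_W_le: "potential (W s) \<le> potential s ^ 2 / 4"
  unfolding potential_W by (simp add: power_divide)

lemma potential_nonneg: "s \<in> P \<Longrightarrow> 0 \<le> potential s"
  by (cases s) (auto simp: mem_P_iff potential_def)

lemma mem_P0_iff: "s \<in> P0 \<longleftrightarrow> s \<in> P \<and> potential s < 4"
  by (cases s) (simp add: P0_def potential_def)

lemma coord_W_le_potential:
  assumes "s \<in> P" and "c \<in> {cx, cy, cu, cv}"
  shows "0 \<le> c (W s) \<and> c (W s) \<le> potential s"
proof (cases s)
  case (fields x y u v)
  then have "0 \<le> x * u" "0 \<le> x * v" "0 \<le> y * u" "0 \<le> y * v"
    using assms(1) by (auto simp: mem_P_iff)
  then show ?thesis
    using assms(2) fields by (auto simp: W_eq potential_def algebra_simps)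
qed

lemma orbit_tendsto_zero_of_P0:
  assumes "s \<in> P0"
  shows "(\<lambda>n. (W ^^ n) s) \<longlonglongrightarrow> (0, 0, 0, 0)"
proof -
  have sP: "s \<in> P" and "potential s < 4"
    using assms by (auto simp: mem_P0_iff)
  define a where "a n = potential ((W ^^ n) s) / 4" for n
  have "a \<longlonglongrightarrow> 0"
  proof (rule square_recurrence_tendsto_zero)
    show "0 \<le> a n" for n
      using potential_nonneg[OF funpow_W_in_P[OF sP]] by (simp add: a_def)
    show "a (Suc n) \<le> a n ^ 2" for n
      using potential_W_le[of "(W ^^ n) s"] by (simp add: a_def power_divide)
  qed (use \<open>potential s < 4\<close> in \<open>simp add: a_def\<close>)
  then have bound: "(\<lambda>n. 4 * a n) \<longlonglongrightarrow> 0"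
    using tendsto_mult_right_zero by blast
  have coord: "(\<lambda>n. c ((W ^^ n) s)) \<longlonglongrightarrow> 0" if c: "c \<in> {cx, cy, cu, cv}" for c
  proof -
    have "(\<lambda>n. c ((W ^^ Suc n) s)) \<longlonglongrightarrow> 0"
      using coord_W_le_potential[OF funpow_W_in_P[OF sP] c]
      by (intro real_tendsto_sandwich[OF _ _ tendsto_const bound]) (simp_all add: a_def)
    then show ?thesis
      by (rule filterlim_sequentially_Suc[THEN iffD1])
  qed
  have "(\<lambda>n. (W ^^ n) s) = (\<lambda>n. (cx ((W ^^ n) s), cy ((W ^^ n) s), cu ((W ^^ n) s), cv ((W ^^ n) s)))"
    by (simp add: cx_def cy_def cu_def cv_def)
  then show ?thesis
    by (simp only:) (intro tendsto_Pair coord; simp)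
qed

lemma sum_and_product_bound_eq:
  fixes a b :: real
  assumes "0 \<le> a" "0 \<le> b" "a + b \<le> 4" "4 \<le> a * b"
  shows "a = 2 \<and> b = 2"
proof -
  have "(a - b) ^ 2 = (a + b) ^ 2 - 4 * (a * b)"
    by (simp add: power2_eq_square algebra_simps)
  also have "\<dots> \<le> 0"
    using assms power_mono[of "a + b" 4 2] by simp
  finally have "a = b" by simp
  then have "a * a \<le> 2 * a"
    using assms by (intro mult_right_mono) auto
  then show ?thesis
    using assms \<open>a = b\<close> by auto
qed

lemma W_in_Q4_and_P0:
  assumes "s \<in> Q4" "s \<notin> P0"
  shows "W s \<in> Q4" and "cy s * cv s \<noteq> 0 \<Longrightarrow> W s \<in> P0"
proof -
  obtain x y u v where s: "s = (x, y, u, v)" by (cases s)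
  have sP: "s \<in> P" and "x + y + u + v \<le> 4"
    using assms(1) by (auto simp: Q4_def s)
  then have "4 \<le> (x + y) * (u + v)"
    using assms(2) by (simp add: mem_P0_iff potential_def s)
  then have "potential s = 4"
    using sum_and_product_bound_eq[of "x + y" "u + v"] sP \<open>x + y + u + v \<le> 4\<close>
    by (auto simp: mem_P_iff potential_def s)
  then have potential: "potential (W s) = 4 - (cy s * cv s) ^ 2 / 36"
    by (simp add: potential_W)
  have "x * u/2 + y * u/4 + (x * v/2 + y * u/4 + y * v/3) + (x * u/2 + x * v/2 + y * u/4 + y * v/3)
          + (y * u/4 + y * v/3) = potential s"
    by (simp add: potential_def s algebra_simps)
  then show "W s \<in> Q4"
    using W_in_P[OF sP] \<open>potential s = 4\<close> by (simp add: Q4_def W_eq s)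
  show "W s \<in> P0" if "cy s * cv s \<noteq> 0"
    using that potential W_in_P[OF sP] by (simp add: mem_P0_iff)
qed

lemma Q4_reaches_P0:
  assumes "s \<in> Q4" "cy ((W ^^ k) s) * cv ((W ^^ k) s) \<noteq> 0"
  shows "\<exists>j. (W ^^ j) s \<in> P0"
  using assms
proof (induction k arbitrary: s)
  case 0
  then show ?case
    using W_in_Q4_and_P0(2) by (metis funpow_0 funpow_Suc_right comp_apply One_nat_def)
next
  case (Suc k)
  show ?case
  proof (cases "s \<in> P0")
    case True
    then show ?thesis by (metis funpow_0)
  next
    case False
    then have "W s \<in> Q4"
      using W_in_Q4_and_P0(1) Suc.prems(1) by blast
    then obtain j where "(W ^^ j) (W s) \<in> P0"
      using Suc.IH[of "W s"] Suc.prems(2) by (auto simp: funpow_Suc_right simp del: funpow.simps)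
    then have "(W ^^ Suc j) s \<in> P0"
      by (simp add: funpow_Suc_right del: funpow.simps)
    then show ?thesis by blast
  qed
qed

definition gauge :: "state \<Rightarrow> real" where
  "gauge s = Max {cx s * cu s / 4, cy s * cu s / 16, cy s * cv s / 9}"

lemma mem_F_iff: "s \<in> F \<longleftrightarrow> s \<in> P \<and> 4 < cx s + cy s + cu s + cv s \<and> 1 < gauge s"
  by (cases s) (simp add: F_def gauge_def)

lemma gauge_cases:
  "gauge s = cx s * cu s / 4 \<or> gauge s = cy s * cu s / 16 \<or> gauge s = cy s * cv s / 9"
  unfolding gauge_def by (simp add: max_def)

lemma gauge_W:
  assumes "s \<in> P"
  shows "gauge s ^ 2 \<le> gauge (W s)" and "2 * gauge s \<le> cu (W s)"
proof -
  obtain x y u v where s: "s = (x, y, u, v)" by (cases s)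
  then have "0 \<le> x * u" "0 \<le> x * v" "0 \<le> y * u" "0 \<le> y * v"
    using assms by (auto simp: mem_P_iff)
  note products = \<open>0 \<le> x * u\<close> \<open>0 \<le> x * v\<close> \<open>0 \<le> y * u\<close> \<open>0 \<le> y * v\<close>
  have xu: "(x * u / 2) * (x * u / 2) \<le> cx (W s) * cu (W s)"
    by (simp only: s W_eq coord_simps, rule mult_mono) (use products in linarith)+
  have yu: "(y * u / 4) * (y * u / 4) \<le> cx (W s) * cu (W s)"
    by (simp only: s W_eq coord_simps, rule mult_mono) (use products in linarith)+
  have yv: "(y * v / 3) * (y * v / 3) \<le> cy (W s) * cv (W s)"
    by (simp only: s W_eq coord_simps, rule mult_mono) (use products in linarith)+
  have gauge_xu: "cx (W s) * cu (W s) / 4 \<le> gauge (W s)"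
    and gauge_yv: "cy (W s) * cv (W s) / 9 \<le> gauge (W s)"
    unfolding gauge_def by simp_all
  have gauge_cases_s: "gauge s = x * u / 4 \<or> gauge s = y * u / 16 \<or> gauge s = y * v / 9"
    using gauge_cases[of s] by (simp add: s)
  show "gauge s ^ 2 \<le> gauge (W s)"
    using gauge_cases_s
  proof (elim disjE)
    assume gauge_eq: "gauge s = x * u / 4"
    have "gauge s ^ 2 = (x * u / 2) * (x * u / 2) / 4"
      unfolding gauge_eq by (simp add: power2_eq_square)
    with xu gauge_xu show ?thesis by linarith
  next
    assume gauge_eq: "gauge s = y * u / 16"
    have "gauge s ^ 2 = (y * u / 4) * (y * u / 4) / 16"
      unfolding gauge_eq by (simp add: power2_eq_square)
    moreover have "0 \<le> (y * u / 4) * (y * u / 4)"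
      by simp
    ultimately show ?thesis
      using yu gauge_xu by linarith
  next
    assume gauge_eq: "gauge s = y * v / 9"
    have "gauge s ^ 2 = (y * v / 3) * (y * v / 3) / 9"
      unfolding gauge_eq by (simp add: power2_eq_square)
    with yv gauge_yv show ?thesis by linarith
  qed
  have "cu (W s) = x * u / 2 + x * v / 2 + y * u / 4 + y * v / 3"
    by (simp add: s W_eq)
  then show "2 * gauge s \<le> cu (W s)"
    using gauge_cases_s products by linarith
qed

lemma orbit_cu_filterlim_at_top_of_F:
  assumes "s \<in> F"
  shows "filterlim (\<lambda>n. cu ((W ^^ n) s)) at_top sequentially"
proof -
  have sP: "s \<in> P" and "1 < gauge s"
    using assms by (auto simp: mem_F_iff)
  define r where "r n = gauge ((W ^^ n) s)" for n
  have "filterlim r at_top sequentially"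
    using gauge_W(1)[OF funpow_W_in_P[OF sP]] \<open>1 < gauge s\<close>
    by (intro square_recurrence_filterlim_at_top) (simp_all add: r_def)
  then have "filterlim (\<lambda>n. 2 * r n) at_top sequentially"
    by (intro filterlim_tendsto_pos_mult_at_top[OF tendsto_const]) simp_all
  then have "filterlim (\<lambda>n. cu ((W ^^ Suc n) s)) at_top sequentially"
    by (rule filterlim_at_top_mono)
       (use gauge_W(2)[OF funpow_W_in_P[OF sP]] in \<open>simp add: r_def\<close>)
  then show ?thesis
    by (rule filterlim_sequentially_Suc[THEN iffD1])
qed

theorem theorem3p1:
  fixes s :: state
  shows "(s \<in> P0
          \<or> (s \<in> Q4 \<and> (\<exists>k. cy ((W ^^ k) s) * cv ((W ^^ k) s) \<noteq> 0))
          \<or> (s \<in> NN \<and> W s \<in> P0)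
          \<or> (s \<in> NN0 \<and> (W ^^ 2) s \<in> P0)
          \<or> (s \<in> NN1 \<and> (W ^^ 2) s \<in> P0)
         \<longrightarrow> ((\<lambda>n. (W ^^ n) s) \<longlongrightarrow> (0, 0, 0, 0)) sequentially)
       \<and> (s \<in> F
          \<or> (s \<in> NN \<and> W s \<in> F)
          \<or> (s \<in> NN0 \<and> (W ^^ 2) s \<in> F)
          \<or> (s \<in> NN1 \<and> (W ^^ 2) s \<in> F)
         \<longrightarrow> (\<exists>c \<in> {cx, cy, cu, cv}.
                filterlim (\<lambda>n. c ((W ^^ n) s)) at_top sequentially))"
proof (intro conjI impI)
  assume "s \<in> P0 \<or> (s \<in> Q4 \<and> (\<exists>k. cy ((W ^^ k) s) * cv ((W ^^ k) s) \<noteq> 0))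
          \<or> (s \<in> NN \<and> W s \<in> P0) \<or> (s \<in> NN0 \<and> (W ^^ 2) s \<in> P0) \<or> (s \<in> NN1 \<and> (W ^^ 2) s \<in> P0)"
  then obtain j where "(W ^^ j) s \<in> P0"
    using Q4_reaches_P0 by (metis funpow_0 funpow_Suc_right comp_apply One_nat_def)
  then show "((\<lambda>n. (W ^^ n) s) \<longlongrightarrow> (0, 0, 0, 0)) sequentially"
    using filterlim_orbit_shift[of id W j s] orbit_tendsto_zero_of_P0 by simp
next
  assume "s \<in> F \<or> (s \<in> NN \<and> W s \<in> F) \<or> (s \<in> NN0 \<and> (W ^^ 2) s \<in> F) \<or> (s \<in> NN1 \<and> (W ^^ 2) s \<in> F)"
  then obtain j where "(W ^^ j) s \<in> F"
    by (metis funpow_0 funpow_Suc_right comp_apply One_nat_def)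
  then have "filterlim (\<lambda>n. cu ((W ^^ n) s)) at_top sequentially"
    by (rule filterlim_orbit_shift[OF orbit_cu_filterlim_at_top_of_F])
  then show "\<exists>c \<in> {cx, cy, cu, cv}. filterlim (\<lambda>n. c ((W ^^ n) s)) at_top sequentially"
    by blast
qed

end
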